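(* Let $(X_t)_{t\in\mathbb N_0}$ be real random variables adapted to a filtration $(\mathcal F_t)_{t\in\mathbb N_0}$ with $X_0=x_0$ deterministic, let $\tau^*$ be a stopping time, let $I^-<I^+$ be reals, and define $\tau^+=\inf\{t\ge0:X_t\ge I^+\}$, $\tau^-=\inf\{t\ge0:X_t\le I^-\}$. For a stopping time $\tau$ and parameters $D,s\ge0$, $R\in\mathbb R$, say that the drift conditions hold if for every $t\ge1$: (C1) $\mathbf 1_{\{\tau>t-1\}}\big(X_{t-1}+R-\mathbb E[X_t\mid\mathcal F_{t-1}]\big)\le0$ almost surely, and (C2) conditioned on $\mathcal F_{t-1}$, the random variable $\mathbf 1_{\{\tau>t-1\}}(X_{t-1}+R-X_t)$ satisfies the one-sided $(D,s)$-Bernstein condition. Let $\epsilon>0$. (1) Suppose the drift conditions hold with $R<0$ and $\tau=\tau^*$, and $x_0>I^-$. Then for every positive integer $T\le\frac{(1-\epsilon)(x_0-I^-)}{-R}$, $$\Pr[\tau^-\le\min\{T,\tau^*\}]\le\exp\Big(-\frac{\epsilon^2(x_0-I^-)^2/2}{sT+\epsilon(x_0-I^-)D/3}\Big).$$ (2) Suppose the drift conditions hold with $R>0$ and $\tau=\min\{\tau^+,\tau^-,\tau^*\}$, and $I^-<x_0<I^+$. Then for every positive integer $T\ge\frac{(1+\epsilon)(I^+-x_0)}{R}$, both $\Pr[\tau^+>T\text{ and }\tau^*>T]$ and $\Pr[\tau^+>\tau^-\text{ and }\tau^*>T]$ are at most $$\exp\Big(-\frac{(x_0-I^-)^2/2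}{sT+(x_0-I^-)D/3}\Big)+\exp\Big(-\frac{\epsilon^2(I^+-x_0)^2/2}{sT+\epsilon(I^+-x_0)D/3}\Big).$$
   Context: One-sided Bernstein condition: for $D,s\ge0$, a random variable $Z$ satisfies the one-sided $(D,s)$-Bernstein condition if $\mathbb E[e^{\lambda Z}]\le\exp\!\big(\frac{\lambda^2 s/2}{1-\lambda D/3}\big)$ for all $\lambda\ge0$ with $\lambda D<3$; "conditioned on $\mathcal F_{t-1}$" means this holds almost surely with $\mathbb E[\,\cdot\mid\mathcal F_{t-1}]$ in place of $\mathbb E$. Infima of empty sets are $+\infty$. *)

theory Defs
  imports "HOL-Probability.Probability" "HOL-Library.Extended_Nat"
begin

definition nat_stopping_time :: "(nat \<Rightarrow> 'a measure) \<Rightarrow> ('a \<Rightarrow> enat) \<Rightarrow> bool" where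
  "nat_stopping_time F \<tau> \<longleftrightarrow> (\<forall>t::nat. Measurable.pred (F t) (\<lambda>\<omega>. \<tau> \<omega> \<le> enat t))"

text \<open>First time the process is at least I (infimum of the empty set is infinity).\<close>
definition hit_up :: "(nat \<Rightarrow> 'a \<Rightarrow> real) \<Rightarrow> real \<Rightarrow> 'a \<Rightarrow> enat" where
  "hit_up X I \<omega> = (INF t \<in> {t. X t \<omega> \<ge> I}. enat t)"

text \<open>First time the process is at most I (infimum of the empty set is infinity).\<close>
definition hit_down :: "(nat \<Rightarrow> 'a \<Rightarrow> real) \<Rightarrow> real \<Rightarrow> 'a \<Rightarrow> enat" where
  "hit_down X I \<omega> = (INF t \<in> {t. X t \<omega> \<le> I}. enat t)"

definition cond_bernstein :: "'a measure \<Rightarrow> 'a measure \<Rightarrow> ('a \<Rightarrow> real) \<Rightarrow> real \<Rightarrow> real \<Rightarrow> bool" where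
  "cond_bernstein M G Z D s \<longleftrightarrow>
     (\<forall>l::real. l \<ge> 0 \<and> l * D < 3 \<longrightarrow>
        (AE \<omega> in M. nn_cond_exp M G (\<lambda>x. ennreal (exp (l * Z x))) \<omega>
                      \<le> ennreal (exp ((l\<^sup>2 * s / 2) / (1 - l * D / 3)))))"

text \<open>Drift conditions (C1), (C2), for every t \<ge> 1, written with t = Suc t'.\<close>
definition drift_conditions ::
  "'a measure \<Rightarrow> (nat \<Rightarrow> 'a measure) \<Rightarrow> (nat \<Rightarrow> 'a \<Rightarrow> real) \<Rightarrow> ('a \<Rightarrow> enat)
     \<Rightarrow> real \<Rightarrow> real \<Rightarrow> real \<Rightarrow> bool" where
  "drift_conditions M F X \<tau> R D s \<longleftrightarrow>
     (\<forall>t::nat.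
        (AE \<omega> in M. indicator {x. \<tau> x > enat t} \<omega>
                       * (X t \<omega> + R - real_cond_exp M (F t) (X (Suc t)) \<omega>) \<le> (0::real))
      \<and> cond_bernstein M (F t)
          (\<lambda>\<omega>. indicator {x. \<tau> x > enat t} \<omega> * (X t \<omega> + R - X (Suc t) \<omega>)) D s)"

end

theory Submission
  imports Defs
begin

(* Write Z t = 1{t < tau} (X t + R - X (t+1)) for the drift-corrected increments stopped at tau.
   Multiplying Z t by the indicator of an event of F t keeps the conditional Bernstein bound
   E[exp (l Z t) | F t] <= exp (psi l), psi l = (l^2 s/2) / (1 - l D/3), so iterated conditioning
   gives E[exp (l S)] <= exp (T psi l) for the sum S of such gated increments over t < T, and
   Chernoff's bound with l = a / (s T + a D/3) gives P[S >= a] <= exp (- (a^2/2) / (s T + a D/3)).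
   Gated by {t < hit_down X Im}, S telescopes to x0 - X m + m R with m = min (hit_down X Im) T,
   provided tau has not occurred before m.
   (1) If X reaches Im by time T and before tau*, then S >= x0 - Im + T R >= eps (x0 - Im).
   (2) On both events either X reaches Im first, so S >= x0 - Im, or X stays below Ip up to T,
   so S > T R - (Ip - x0) >= eps (Ip - x0); a union bound adds the two tails. *)

lemma hit_down_le_enat_iff: "hit_down X I \<omega> \<le> enat k \<longleftrightarrow> (\<exists>j\<le>k. X j \<omega> \<le> I)"
  unfolding hit_down_def INF_le_iff
proof safe
  assume "\<forall>y > enat k. \<exists>i\<in>{t. X t \<omega> \<le> I}. enat i < y"
  from this[rule_format, of "enat (Suc k)"] show "\<exists>j\<le>k. X j \<omega> \<le> I"
    by (auto simp: less_Suc_eq_le)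
next
  fix j y assume "j \<le> k" "X j \<omega> \<le> I" "enat k < y"
  then show "\<exists>i\<in>{t. X t \<omega> \<le> I}. enat i < y"
    by (intro bexI[of _ j]) (auto intro: le_less_trans[of "enat j" "enat k"])
qed

lemma hit_up_eq_hit_down_uminus: "hit_up X I = hit_down (\<lambda>t \<omega>. - X t \<omega>) (- I)"
  by (simp add: fun_eq_iff hit_up_def hit_down_def)

lemma enat_less_hit_down_iff: "enat k < hit_down X I \<omega> \<longleftrightarrow> (\<forall>j\<le>k. I < X j \<omega>)"
  using hit_down_le_enat_iff[of X I \<omega> k] by (auto simp: not_le)

lemma enat_less_hit_up_iff: "enat k < hit_up X I \<omega> \<longleftrightarrow> (\<forall>j\<le>k. X j \<omega> < I)"
  by (simp add: hit_up_eq_hit_down_uminus enat_less_hit_down_iff)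

lemma hit_down_eq_enatD:
  assumes "hit_down X I \<omega> = enat k"
  shows "X k \<omega> \<le> I"
proof -
  obtain j where "j \<le> k" "X j \<omega> \<le> I"
    using assms hit_down_le_enat_iff[of X I \<omega> k] by auto
  moreover have "\<not> j < k"
    using assms hit_down_le_enat_iff[of X I \<omega> j] \<open>X j \<omega> \<le> I\<close> by auto
  ultimately show ?thesis by (metis le_neq_implies_less)
qed

lemma (in filtration) measurable_F_mono: "f \<in> measurable (F i) N \<Longrightarrow> i \<le> j \<Longrightarrow> f \<in> measurable (F j) N"
  by (rule measurable_from_subalg) (auto simp: subalgebra_def space_F sets_F_mono)

lemma nat_stopping_time_hit_down:
  assumes "filtration \<Omega> F" and adapted: "\<And>t. X t \<in> borel_measurable (F t)"
  shows "nat_stopping_time F (hit_down X I)"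
  unfolding nat_stopping_time_def hit_down_le_enat_iff
proof
  fix t
  have [measurable]: "X j \<in> borel_measurable (F t)" if "j \<le> t" for j
    using filtration.measurable_F_mono[OF assms(1) adapted that] .
  have "Measurable.pred (F t) (\<lambda>\<omega>. \<exists>j\<in>{..t}. X j \<omega> \<le> I)"
    by (intro pred_intros_finite) auto
  then show "Measurable.pred (F t) (\<lambda>\<omega>. \<exists>j\<le>t. X j \<omega> \<le> I)"
    by (simp add: Bex_def)
qed

lemma nat_stopping_time_hit_up:
  assumes "filtration \<Omega> F" and "\<And>t. X t \<in> borel_measurable (F t)"
  shows "nat_stopping_time F (hit_up X I)"
  unfolding hit_up_eq_hit_down_uminus using assms by (intro nat_stopping_time_hit_down) auto

lemma nat_stopping_time_min:
  "nat_stopping_time F \<sigma> \<Longrightarrow> nat_stopping_time F \<tau> \<Longrightarrow>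
    nat_stopping_time F (\<lambda>\<omega>. min (\<sigma> \<omega>) (\<tau> \<omega>))"
  by (auto simp: nat_stopping_time_def min_le_iff_disj intro!: pred_intros_logic)

lemma nat_stopping_time_less_sets:
  assumes "filtration \<Omega> F" and "nat_stopping_time F \<sigma>"
  shows "{\<omega> \<in> \<Omega>. enat t < \<sigma> \<omega>} \<in> sets (F t)"
proof -
  have [measurable]: "Measurable.pred (F t) (\<lambda>\<omega>. \<sigma> \<omega> \<le> enat t)"
    using assms(2) unfolding nat_stopping_time_def by auto
  have "Measurable.pred (F t) (\<lambda>\<omega>. \<not> \<sigma> \<omega> \<le> enat t)"
    by measurable
  then show ?thesis
    by (simp add: pred_def not_le filtration.space_F[OF assms(1)])
qed

lemma (in sigma_finite_subalgebra) nn_cond_exp_exp_indicator_mult_le: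
  fixes Z :: "'a \<Rightarrow> real" and c :: ennreal
  assumes G [measurable]: "G \<in> sets F" and [measurable]: "Z \<in> borel_measurable M" and "1 \<le> c"
    and mgf: "AE \<omega> in M. nn_cond_exp M F (\<lambda>x. ennreal (exp (l * Z x))) \<omega> \<le> c"
  shows "AE \<omega> in M. nn_cond_exp M F (\<lambda>x. ennreal (exp (l * (indicator G x * Z x)))) \<omega> \<le> c"
proof -
  define g where "g = (\<lambda>x. ennreal (exp (l * Z x)))"
  have [measurable]: "G \<in> sets M" "space M - G \<in> sets F"
    using subalg sets.compl_sets[OF G] by (auto simp: subalgebra_def)
  have [measurable]: "g \<in> borel_measurable M"
    unfolding g_def by measurable
  have split: "AE \<omega> in M. nn_cond_exp M F (\<lambda>x. ennreal (exp (l * (indicator G x * Z x)))) \<omega>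
      = nn_cond_exp M F (\<lambda>x. indicator G x * g x + indicator (space M - G) x) \<omega>"
    by (rule nn_cond_exp_cong) (auto simp: g_def split: split_indicator)
  have sum: "AE \<omega> in M. nn_cond_exp M F (\<lambda>x. indicator G x * g x) \<omega>
      + nn_cond_exp M F (indicator (space M - G)) \<omega>
      = nn_cond_exp M F (\<lambda>x. indicator G x * g x + indicator (space M - G) x) \<omega>"
    by (rule nn_cond_exp_sum) auto
  have prod: "AE \<omega> in M. indicator G \<omega> * nn_cond_exp M F g \<omega> = nn_cond_exp M F (\<lambda>x. indicator G x * g x) \<omega>"
    by (rule nn_cond_exp_prod) auto
  have compl: "AE \<omega> in M. indicator (space M - G) \<omega> = nn_cond_exp M F (indicator (space M - G)) \<omega>"
    by (rule nn_cond_exp_F_meas) auto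
  from split sum prod compl mgf[folded g_def] show ?thesis
  proof eventually_elim
    case (elim \<omega>)
    then have "nn_cond_exp M F (\<lambda>x. ennreal (exp (l * (indicator G x * Z x)))) \<omega>
        = indicator G \<omega> * nn_cond_exp M F g \<omega> + indicator (space M - G) \<omega>"
      by simp
    also have "\<dots> \<le> c"
      using elim(5) \<open>1 \<le> c\<close> by (cases "\<omega> \<in> G") (auto split: split_indicator)
    finally show ?case .
  qed
qed

lemma (in sigma_finite_subalgebra) cond_bernstein_indicator_mult:
  assumes "G \<in> sets F" and "Z \<in> borel_measurable M" and "s \<ge> 0" and "cond_bernstein M F Z D s"
  shows "cond_bernstein M F (\<lambda>\<omega>. indicator G \<omega> * Z \<omega>) D s"
  unfolding cond_bernstein_def
proof (intro allI impI)
  fix l :: real assume l: "0 \<le> l \<and> l * D < 3"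
  then have "0 < 1 - l * D / 3"
    by linarith
  then have "0 \<le> (l\<^sup>2 * s / 2) / (1 - l * D / 3)"
    using \<open>s \<ge> 0\<close> by (intro divide_nonneg_pos) auto
  moreover have "AE \<omega> in M. nn_cond_exp M F (\<lambda>x. ennreal (exp (l * Z x))) \<omega>
      \<le> ennreal (exp ((l\<^sup>2 * s / 2) / (1 - l * D / 3)))"
    using assms(4) l unfolding cond_bernstein_def by blast
  ultimately show "AE \<omega> in M. nn_cond_exp M F (\<lambda>x. ennreal (exp (l * (indicator G x * Z x)))) \<omega>
      \<le> ennreal (exp ((l\<^sup>2 * s / 2) / (1 - l * D / 3)))"
    by (intro nn_cond_exp_exp_indicator_mult_le[OF assms(1,2)]) auto
qed

lemma bernstein_chernoff_exponent:
  fixes a s D t :: real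
  assumes a: "a > 0" and s: "s \<ge> 0" and D: "D \<ge> 0" and t: "t > 0"
  obtains l where "l > 0" and "l * D < 3"
    and "- l * a + t * ((l\<^sup>2 * s / 2) / (1 - l * D / 3)) \<le> - ((a\<^sup>2 / 2) / (s * t + a * D / 3))"
proof (cases "s > 0")
  case True
  \<comment> \<open>the usual Bernstein choice l = a / d turns the exponent into exactly -(a^2/2)/d\<close>
  define d where "d = s * t + a * D / 3"
  have st: "s * t > 0" using True t by simp
  have d: "d > 0" "d > a * D / 3" unfolding d_def using st a D by (auto intro: add_pos_nonneg)
  have den: "1 - (a / d) * D / 3 = s * t / d"
    using d unfolding d_def by (simp add: field_simps)
  have "- (a / d) * a + t * (((a / d)\<^sup>2 * s / 2) / (1 - (a / d) * D / 3)) = - ((a\<^sup>2 / 2) / d)"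
    unfolding den using d st t True by (simp add: field_simps power2_eq_square)
  moreover have "a / d > 0" "(a / d) * D < 3"
    using a d by (auto simp: field_simps)
  ultimately show ?thesis
    using that unfolding d_def by auto
next
  case False
  then have "s = 0" using s by simp
  show ?thesis
  proof (cases "D > 0")
    case True
    then show ?thesis
      using a \<open>s = 0\<close> by (intro that[of "3 / (2 * D)"]) (auto simp: field_simps power2_eq_square)
  next
    case False
    \<comment> \<open>s = D = 0: the right-hand side is -(a^2/2)/0 = 0\<close>
    then show ?thesis
      using a D \<open>s = 0\<close> by (intro that[of 1]) auto
  qed
qed

definition drift_increment ::
  "('a \<Rightarrow> enat) \<Rightarrow> (nat \<Rightarrow> 'a \<Rightarrow> real) \<Rightarrow> real \<Rightarrow> nat \<Rightarrow> 'a \<Rightarrow> real" where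
  "drift_increment \<tau> X R t \<omega> = indicator {x. \<tau> x > enat t} \<omega> * (X t \<omega> + R - X (Suc t) \<omega>)"

lemma drift_conditions_cond_bernstein:
  "drift_conditions M F X \<tau> R D s \<Longrightarrow> cond_bernstein M (F t) (drift_increment \<tau> X R t) D s"
  by (simp add: drift_conditions_def drift_increment_def[abs_def])

locale filtered_prob_space = prob_space M + filtration "space M" F
  for M :: "'a measure" and F :: "nat \<Rightarrow> 'a measure" +
  assumes subalgebra_F: "\<And>t. subalgebra M (F t)"
begin

lemma nn_integral_exp_sum_le:
  fixes Y :: "nat \<Rightarrow> 'a \<Rightarrow> real"
  assumes Y: "\<And>t. Y t \<in> borel_measurable (F (Suc t))"
    and mgf: "\<And>t. AE \<omega> in M. nn_cond_exp M (F t) (\<lambda>x. ennreal (exp (l * Y t x))) \<omega> \<le> ennreal (exp \<psi>)"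
  shows "(\<integral>\<^sup>+\<omega>. ennreal (exp (l * (\<Sum>i<n. Y i \<omega>))) \<partial>M) \<le> ennreal (exp (real n * \<psi>))"
proof (induction n)
  case 0
  show ?case by (simp add: emeasure_space_1)
next
  case (Suc n)
  interpret finite_measure_subalgebra M "F n"
    using subalgebra_F by unfold_locales
  define E where "E \<omega> = ennreal (exp (l * (\<Sum>i<n. Y i \<omega>)))" for \<omega>
  have "Y i \<in> borel_measurable (F n)" if "i < n" for i
    using measurable_F_mono[OF Y] that by simp
  then have [measurable]: "(\<lambda>\<omega>. \<Sum>i<n. Y i \<omega>) \<in> borel_measurable (F n)"
    by (intro borel_measurable_sum) auto
  then have [measurable]: "E \<in> borel_measurable (F n)"
    unfolding E_def by measurable
  have [measurable]: "Y n \<in> borel_measurable M"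
    using measurable_from_subalg[OF subalgebra_F Y] .
  have "(\<integral>\<^sup>+\<omega>. ennreal (exp (l * (\<Sum>i<Suc n. Y i \<omega>))) \<partial>M)
      = (\<integral>\<^sup>+\<omega>. E \<omega> * ennreal (exp (l * Y n \<omega>)) \<partial>M)"
    by (simp add: E_def distrib_left exp_add ennreal_mult)
  also have "\<dots> = (\<integral>\<^sup>+\<omega>. E \<omega> * nn_cond_exp M (F n) (\<lambda>x. ennreal (exp (l * Y n x))) \<omega> \<partial>M)"
    by (rule nn_cond_exp_intg[symmetric]) auto
  also have "\<dots> \<le> (\<integral>\<^sup>+\<omega>. E \<omega> * ennreal (exp \<psi>) \<partial>M)"
    using mgf[of n] by (intro nn_integral_mono_AE) (auto elim!: eventually_mono intro: mult_left_mono)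
  also have "\<dots> = (\<integral>\<^sup>+\<omega>. E \<omega> \<partial>M) * ennreal (exp \<psi>)"
    by (rule nn_integral_multc) (rule measurable_from_subalg[OF subalgebra_F], measurable)
  also have "\<dots> \<le> ennreal (exp (real n * \<psi>)) * ennreal (exp \<psi>)"
    using Suc.IH unfolding E_def by (intro mult_right_mono) auto
  also have "\<dots> = ennreal (exp (real (Suc n) * \<psi>))"
    by (simp add: ennreal_mult[symmetric] exp_add[symmetric] algebra_simps)
  finally show ?case .
qed

lemma bernstein_ineq_sum_ge:
  fixes Y :: "nat \<Rightarrow> 'a \<Rightarrow> real"
  assumes Y: "\<And>t. Y t \<in> borel_measurable (F (Suc t))"
    and bern: "\<And>t. cond_bernstein M (F t) (Y t) D s"
    and "D \<ge> 0" "s \<ge> 0" "a > 0" "n > 0"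
  shows "prob {\<omega> \<in> space M. a \<le> (\<Sum>i<n. Y i \<omega>)} \<le> exp (- ((a\<^sup>2 / 2) / (s * real n + a * D / 3)))"
proof -
  obtain l where l: "l > 0" "l * D < 3"
    and exponent: "- l * a + real n * ((l\<^sup>2 * s / 2) / (1 - l * D / 3))
      \<le> - ((a\<^sup>2 / 2) / (s * real n + a * D / 3))"
    using bernstein_chernoff_exponent[of a s D "real n"] assms(3-6) by auto
  define \<psi> where "\<psi> = (l\<^sup>2 * s / 2) / (1 - l * D / 3)"
  have [measurable]: "Y i \<in> borel_measurable M" for i
    using measurable_from_subalg[OF subalgebra_F Y] .
  have mgf: "AE \<omega> in M. nn_cond_exp M (F t) (\<lambda>x. ennreal (exp (l * Y t x))) \<omega> \<le> ennreal (exp \<psi>)" for t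
    using bern[of t] l unfolding cond_bernstein_def \<psi>_def by auto
  have "emeasure M {\<omega> \<in> space M. a \<le> (\<Sum>i<n. Y i \<omega>)}
      \<le> ennreal (exp (- l * a))
        * (\<integral>\<^sup>+\<omega>. ennreal (exp (l * (\<Sum>i<n. Y i \<omega>))) * indicator (space M) \<omega> \<partial>M)"
    using l by (intro Chernoff_ineq_nn_integral_ge) auto
  also have "(\<integral>\<^sup>+\<omega>. ennreal (exp (l * (\<Sum>i<n. Y i \<omega>))) * indicator (space M) \<omega> \<partial>M)
      = (\<integral>\<^sup>+\<omega>. ennreal (exp (l * (\<Sum>i<n. Y i \<omega>))) \<partial>M)"
    by (rule nn_integral_cong) simp
  also have "ennreal (exp (- l * a)) * \<dots> \<le> ennreal (exp (- l * a)) * ennreal (exp (real n * \<psi>))"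
    by (intro mult_left_mono nn_integral_exp_sum_le[OF Y mgf]) simp
  also have "\<dots> \<le> ennreal (exp (- ((a\<^sup>2 / 2) / (s * real n + a * D / 3))))"
    using exponent unfolding \<psi>_def by (simp add: ennreal_mult[symmetric] exp_add[symmetric])
  finally show ?thesis
    by (simp add: emeasure_eq_measure ennreal_le_iff)
qed

lemma measurable_drift_increment:
  assumes "\<And>t. X t \<in> borel_measurable (F t)" and "nat_stopping_time F \<tau>"
  shows "drift_increment \<tau> X R t \<in> borel_measurable (F (Suc t))"
proof -
  have [measurable]: "X t \<in> borel_measurable (F (Suc t))" "X (Suc t) \<in> borel_measurable (F (Suc t))"
    using measurable_F_mono[OF assms(1)] by auto
  have [measurable]: "{\<omega> \<in> space M. enat t < \<tau> \<omega>} \<in> sets (F (Suc t))"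
    using nat_stopping_time_less_sets[OF filtration_axioms assms(2)] sets_F_mono[of t "Suc t"] by auto
  have "(\<lambda>\<omega>. indicator {\<omega> \<in> space M. enat t < \<tau> \<omega>} \<omega> * (X t \<omega> + R - X (Suc t) \<omega>))
      \<in> borel_measurable (F (Suc t))"
    by measurable
  then show ?thesis
    by (rule measurable_cong[THEN iffD1, rotated]) (auto simp: drift_increment_def space_F split: split_indicator)
qed

text \<open>The gates are intersected with \<^term>\<open>space M\<close> so that they are events of the filtration.\<close>

definition stopped_drift_sum ::
  "('a \<Rightarrow> enat) \<Rightarrow> ('a \<Rightarrow> enat) \<Rightarrow> (nat \<Rightarrow> 'a \<Rightarrow> real) \<Rightarrow> real \<Rightarrow> nat \<Rightarrow> 'a \<Rightarrow> real" where
  "stopped_drift_sum \<sigma> \<tau> X R T \<omega> =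
    (\<Sum>i<T. indicator {x \<in> space M. enat i < \<sigma> x} \<omega> * drift_increment \<tau> X R i \<omega>)"

lemma stopped_drift_sum_eq:
  assumes "\<omega> \<in> space M" and m: "enat m = min (\<sigma> \<omega>) (enat T)"
    and "\<And>i. i < m \<Longrightarrow> enat i < \<tau> \<omega>"
  shows "stopped_drift_sum \<sigma> \<tau> X R T \<omega> = X 0 \<omega> - X m \<omega> + real m * R"
proof -
  have "m \<le> T" and "\<And>i. i < T \<Longrightarrow> enat i < \<sigma> \<omega> \<longleftrightarrow> i < m"
    using m by (auto simp flip: enat_ord_simps simp del: enat_ord_simps)
  then have "stopped_drift_sum \<sigma> \<tau> X R T \<omega> = (\<Sum>i<m. X i \<omega> - X (Suc i) \<omega> + R)"
    unfolding stopped_drift_sum_def using assms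
    by (intro sum.mono_neutral_cong_right) (auto simp: drift_increment_def split: split_indicator)
  also have "\<dots> = X 0 \<omega> - X m \<omega> + real m * R"
    by (simp add: sum.distrib sum_lessThan_telescope'[of "\<lambda>i. X i \<omega>"])
  finally show ?thesis .
qed

lemma
  assumes "\<And>t. X t \<in> borel_measurable (F t)" and "nat_stopping_time F \<sigma>" and "nat_stopping_time F \<tau>"
  shows measurable_gated_drift_increment:
      "(\<lambda>\<omega>. indicator {x \<in> space M. enat t < \<sigma> x} \<omega> * drift_increment \<tau> X R t \<omega>)
        \<in> borel_measurable (F (Suc t))"
    and measurable_stopped_drift_sum: "stopped_drift_sum \<sigma> \<tau> X R T \<in> borel_measurable M"
proof -
  have "{x \<in> space M. enat t < \<sigma> x} \<in> sets (F (Suc t))" for t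
    using nat_stopping_time_less_sets[OF filtration_axioms assms(2)] sets_F_mono[of t "Suc t"] by auto
  then show gated: "(\<lambda>\<omega>. indicator {x \<in> space M. enat t < \<sigma> x} \<omega> * drift_increment \<tau> X R t \<omega>)
      \<in> borel_measurable (F (Suc t))" for t
    using measurable_drift_increment[OF assms(1,3)] by measurable
  show "stopped_drift_sum \<sigma> \<tau> X R T \<in> borel_measurable M"
    unfolding stopped_drift_sum_def[abs_def]
    by (intro borel_measurable_sum measurable_from_subalg[OF subalgebra_F gated])
qed

lemma bernstein_ineq_stopped_drift_sum_ge:
  assumes adapted: "\<And>t. X t \<in> borel_measurable (F t)"
    and \<sigma>: "nat_stopping_time F \<sigma>" and \<tau>: "nat_stopping_time F \<tau>"
    and bern: "\<And>t. cond_bernstein M (F t) (drift_increment \<tau> X R t) D s"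
    and "D \<ge> 0" and "s \<ge> 0" and "a > 0" and "T > 0"
  shows "prob {\<omega> \<in> space M. a \<le> stopped_drift_sum \<sigma> \<tau> X R T \<omega>}
    \<le> exp (- ((a\<^sup>2 / 2) / (s * real T + a * D / 3)))"
  unfolding stopped_drift_sum_def
proof (rule bernstein_ineq_sum_ge)
  fix t
  interpret finite_measure_subalgebra M "F t"
    using subalgebra_F by unfold_locales
  show "cond_bernstein M (F t)
      (\<lambda>\<omega>. indicator {x \<in> space M. enat t < \<sigma> x} \<omega> * drift_increment \<tau> X R t \<omega>) D s"
    using nat_stopping_time_less_sets[OF filtration_axioms \<sigma>] \<open>s \<ge> 0\<close> bern
      measurable_from_subalg[OF subalgebra_F measurable_drift_increment[OF adapted \<tau>]]
    by (intro cond_bernstein_indicator_mult)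
qed (use assms measurable_gated_drift_increment in auto)

lemma stopped_drift_sum_ge_of_hit_down:
  fixes x0 Im :: real
  assumes "\<omega> \<in> space M" and "X 0 \<omega> = x0" and "R \<le> 0"
    and hit: "hit_down X Im \<omega> \<le> min (enat T) (\<tau> \<omega>)"
    and T: "real T * - R \<le> (1 - \<epsilon>) * (x0 - Im)"
  shows "\<epsilon> * (x0 - Im) \<le> stopped_drift_sum (hit_down X Im) \<tau> X R T \<omega>"
proof -
  obtain m where m: "hit_down X Im \<omega> = enat m" "m \<le> T"
    using hit by (cases "hit_down X Im \<omega>") auto
  have "stopped_drift_sum (hit_down X Im) \<tau> X R T \<omega> = x0 - X m \<omega> + real m * R"
    using assms m by (subst stopped_drift_sum_eq[where m=m]) (auto intro: less_le_trans[of _ "enat m"])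
  moreover have "X m \<omega> \<le> Im"
    using m(1) by (rule hit_down_eq_enatD)
  moreover have "real T * R \<le> real m * R"
    using m(2) \<open>R \<le> 0\<close> by (simp add: mult_right_mono_neg)
  ultimately show ?thesis
    using T by (simp add: algebra_simps)
qed

lemma prob_hit_down_before_le:
  fixes x0 Im :: real
  assumes adapted: "\<And>t. X t \<in> borel_measurable (F t)"
    and X0: "\<And>\<omega>. \<omega> \<in> space M \<Longrightarrow> X 0 \<omega> = x0"
    and \<tau>: "nat_stopping_time F \<tau>"
    and "\<And>t. cond_bernstein M (F t) (drift_increment \<tau> X R t) D s"
    and "D \<ge> 0" and "s \<ge> 0" and "R < 0" and "\<epsilon> > 0" and "Im < x0" and "T > 0"
    and T: "real T * - R \<le> (1 - \<epsilon>) * (x0 - Im)"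
  shows "prob {\<omega> \<in> space M. hit_down X Im \<omega> \<le> min (enat T) (\<tau> \<omega>)}
    \<le> exp (- ((\<epsilon>\<^sup>2 * (x0 - Im)\<^sup>2 / 2) / (s * real T + \<epsilon> * (x0 - Im) * D / 3)))"
proof -
  define S where "S = stopped_drift_sum (hit_down X Im) \<tau> X R T"
  have hd: "nat_stopping_time F (hit_down X Im)"
    using filtration_axioms adapted by (rule nat_stopping_time_hit_down)
  have "{\<omega> \<in> space M. hit_down X Im \<omega> \<le> min (enat T) (\<tau> \<omega>)}
      \<subseteq> {\<omega> \<in> space M. \<epsilon> * (x0 - Im) \<le> S \<omega>}"
    unfolding S_def using X0 \<open>R < 0\<close> T by (auto intro: stopped_drift_sum_ge_of_hit_down)
  moreover have "{\<omega> \<in> space M. \<epsilon> * (x0 - Im) \<le> S \<omega>} \<in> sets M"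
    unfolding S_def using measurable_stopped_drift_sum[OF adapted hd \<tau>] by measurable
  ultimately have "prob {\<omega> \<in> space M. hit_down X Im \<omega> \<le> min (enat T) (\<tau> \<omega>)}
      \<le> prob {\<omega> \<in> space M. \<epsilon> * (x0 - Im) \<le> S \<omega>}"
    by (rule finite_measure_mono)
  also have "\<dots> \<le> exp (- (((\<epsilon> * (x0 - Im))\<^sup>2 / 2) / (s * real T + \<epsilon> * (x0 - Im) * D / 3)))"
    unfolding S_def using assms hd by (intro bernstein_ineq_stopped_drift_sum_ge) auto
  finally show ?thesis
    by (simp add: power_mult_distrib)
qed

lemma stopped_drift_sum_ge_of_no_upper_exit:
  fixes X :: "nat \<Rightarrow> 'a \<Rightarrow> real" and \<tau>s :: "'a \<Rightarrow> enat" and x0 Im Ip R :: real and T :: nat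
  defines "S \<equiv> stopped_drift_sum (hit_down X Im)
    (\<lambda>\<omega>. min (min (hit_up X Ip \<omega>) (hit_down X Im \<omega>)) (\<tau>s \<omega>)) X R T"
  assumes "\<omega> \<in> space M" and "X 0 \<omega> = x0" and "R \<ge> 0"
    and up: "min (hit_down X Im \<omega>) (enat T) < hit_up X Ip \<omega>" and "enat T < \<tau>s \<omega>"
    and T: "(1 + \<epsilon>) * (Ip - x0) \<le> real T * R"
  shows "x0 - Im \<le> S \<omega> \<or> \<epsilon> * (Ip - x0) \<le> S \<omega>"
proof -
  obtain m where m: "enat m = min (hit_down X Im \<omega>) (enat T)"
    by (cases "hit_down X Im \<omega>") auto
  have "enat m < hit_up X Ip \<omega>" "enat m \<le> hit_down X Im \<omega>" "enat m < \<tau>s \<omega>"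
    using up \<open>enat T < \<tau>s \<omega>\<close> unfolding m by (auto intro: le_less_trans[of _ "enat T"])
  moreover have "enat i < enat m" if "i < m" for i
    using that by simp
  ultimately have "enat i < min (min (hit_up X Ip \<omega>) (hit_down X Im \<omega>)) (\<tau>s \<omega>)" if "i < m" for i
    using that by (metis min_less_iff_conj order.strict_trans order.strict_trans2)
  then have S: "S \<omega> = x0 - X m \<omega> + real m * R"
    unfolding S_def using assms m by (subst stopped_drift_sum_eq) auto
  show ?thesis
  proof (cases "hit_down X Im \<omega> = enat m")
    case True
    then have "X m \<omega> \<le> Im"
      by (rule hit_down_eq_enatD)
    moreover have "0 \<le> real m * R"
      using \<open>R \<ge> 0\<close> by simp
    ultimately have "x0 - Im \<le> S \<omega>"
      using S by simp
    then show ?thesis ..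
  next
    case False
    then have "m = T" and "enat T < hit_up X Ip \<omega>"
      using m up by (auto simp: min_def split: if_splits)
    then have "X T \<omega> < Ip"
      by (simp add: enat_less_hit_up_iff)
    with S T \<open>m = T\<close> have "\<epsilon> * (Ip - x0) \<le> S \<omega>"
      by (simp add: algebra_simps)
    then show ?thesis ..
  qed
qed

lemma prob_no_upper_exit_le:
  fixes X :: "nat \<Rightarrow> 'a \<Rightarrow> real" and \<tau>s :: "'a \<Rightarrow> enat" and x0 Im Ip :: real
  defines "\<tau> \<equiv> \<lambda>\<omega>. min (min (hit_up X Ip \<omega>) (hit_down X Im \<omega>)) (\<tau>s \<omega>)"
  assumes adapted: "\<And>t. X t \<in> borel_measurable (F t)"
    and X0: "\<And>\<omega>. \<omega> \<in> space M \<Longrightarrow> X 0 \<omega> = x0"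
    and \<tau>s: "nat_stopping_time F \<tau>s"
    and "\<And>t. cond_bernstein M (F t) (drift_increment \<tau> X R t) D s"
    and "D \<ge> 0" and "s \<ge> 0" and "R > 0" and "\<epsilon> > 0" and "Im < x0" and "x0 < Ip" and "T > 0"
    and T: "(1 + \<epsilon>) * (Ip - x0) \<le> real T * R"
    and A: "A \<subseteq> {\<omega> \<in> space M.
      min (hit_down X Im \<omega>) (enat T) < hit_up X Ip \<omega> \<and> enat T < \<tau>s \<omega>}"
  shows "prob A \<le> exp (- (((x0 - Im)\<^sup>2 / 2) / (s * real T + (x0 - Im) * D / 3)))
                 + exp (- ((\<epsilon>\<^sup>2 * (Ip - x0)\<^sup>2 / 2) / (s * real T + \<epsilon> * (Ip - x0) * D / 3)))"
proof -
  define E where "E a = {\<omega> \<in> space M. a \<le> stopped_drift_sum (hit_down X Im) \<tau> X R T \<omega>}" for a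
  have hd: "nat_stopping_time F (hit_down X Im)"
    using filtration_axioms adapted by (rule nat_stopping_time_hit_down)
  have \<tau>: "nat_stopping_time F \<tau>"
    unfolding \<tau>_def using filtration_axioms adapted \<tau>s
    by (intro nat_stopping_time_min nat_stopping_time_hit_up nat_stopping_time_hit_down)
  have "A \<subseteq> E (x0 - Im) \<union> E (\<epsilon> * (Ip - x0))"
  proof
    fix \<omega> assume "\<omega> \<in> A"
    then have \<omega>: "\<omega> \<in> space M"
      and up: "min (hit_down X Im \<omega>) (enat T) < hit_up X Ip \<omega>" and "enat T < \<tau>s \<omega>"
      using A by auto
    with X0 \<open>R > 0\<close> T stopped_drift_sum_ge_of_no_upper_exit[of \<omega> X x0 R Im T Ip \<tau>s \<epsilon>]
    show "\<omega> \<in> E (x0 - Im) \<union> E (\<epsilon> * (Ip - x0))"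
      unfolding E_def \<tau>_def by auto
  qed
  moreover have "E a \<in> sets M" for a
    unfolding E_def using measurable_stopped_drift_sum[OF adapted hd \<tau>] by measurable
  ultimately have "prob A \<le> prob (E (x0 - Im) \<union> E (\<epsilon> * (Ip - x0)))"
    by (intro finite_measure_mono) auto
  also have "\<dots> \<le> prob (E (x0 - Im)) + prob (E (\<epsilon> * (Ip - x0)))"
    using \<open>E _ \<in> sets M\<close> by (intro measure_subadditive) auto
  also have "\<dots> \<le> exp (- (((x0 - Im)\<^sup>2 / 2) / (s * real T + (x0 - Im) * D / 3)))
      + exp (- (((\<epsilon> * (Ip - x0))\<^sup>2 / 2) / (s * real T + \<epsilon> * (Ip - x0) * D / 3)))"
    unfolding E_def using assms hd \<tau>
    by (intro add_mono bernstein_ineq_stopped_drift_sum_ge) auto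
  finally show ?thesis
    by (simp add: power_mult_distrib)
qed

end

theorem mainTheorem19:
  fixes M :: "'a measure" and F :: "nat \<Rightarrow> 'a measure" and X :: "nat \<Rightarrow> 'a \<Rightarrow> real"
    and \<tau>s :: "'a \<Rightarrow> enat"
    and x0 Im Ip D s R \<epsilon> :: real
  assumes M: "prob_space M"
    and filt: "filtration (space M) F"
    and sub: "\<And>t. subalgebra M (F t)"
    and adapted: "\<And>t. X t \<in> borel_measurable (F t)"
    and integ: "\<And>t. integrable M (X t)"
    and X0: "\<And>\<omega>. \<omega> \<in> space M \<Longrightarrow> X 0 \<omega> = x0"
    and stop: "nat_stopping_time F \<tau>s"
    and I: "Im < Ip"
    and D: "D \<ge> 0" and s: "s \<ge> 0"
    and eps: "\<epsilon> > 0"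
  shows
    "(drift_conditions M F X \<tau>s R D s \<and> R < 0 \<and> x0 > Im \<longrightarrow>
       (\<forall>T::nat. T > 0 \<and> real T \<le> (1 - \<epsilon>) * (x0 - Im) / (- R) \<longrightarrow>
          measure M {\<omega> \<in> space M. hit_down X Im \<omega> \<le> min (enat T) (\<tau>s \<omega>)}
            \<le> exp (- ((\<epsilon>\<^sup>2 * (x0 - Im)\<^sup>2 / 2) / (s * real T + \<epsilon> * (x0 - Im) * D / 3)))))
     \<and>
     (drift_conditions M F X (\<lambda>\<omega>. min (min (hit_up X Ip \<omega>) (hit_down X Im \<omega>)) (\<tau>s \<omega>)) R D s
        \<and> R > 0 \<and> Im < x0 \<and> x0 < Ip \<longrightarrow>
       (\<forall>T::nat. T > 0 \<and> real T \<ge> (1 + \<epsilon>) * (Ip - x0) / R \<longrightarrow>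
          (let B = exp (- (((x0 - Im)\<^sup>2 / 2) / (s * real T + (x0 - Im) * D / 3)))
                 + exp (- ((\<epsilon>\<^sup>2 * (Ip - x0)\<^sup>2 / 2) / (s * real T + \<epsilon> * (Ip - x0) * D / 3)))
           in measure M {\<omega> \<in> space M. hit_up X Ip \<omega> > enat T \<and> \<tau>s \<omega> > enat T} \<le> B
            \<and> measure M {\<omega> \<in> space M. hit_up X Ip \<omega> > hit_down X Im \<omega> \<and> \<tau>s \<omega> > enat T} \<le> B)))"
proof -
  interpret filtered_prob_space M F
    using M filt sub by (simp add: filtered_prob_space_def filtered_prob_space_axioms_def)
  show ?thesis
  proof ((intro conjI impI allI; elim conjE), goal_cases)
    case (1 T)
    then have "real T * - R \<le> (1 - \<epsilon>) * (x0 - Im)"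
      using pos_le_divide_eq[of "- R"] by auto
    with 1 show ?case
      using adapted X0 stop D s eps
      by (intro prob_hit_down_before_le drift_conditions_cond_bernstein) auto
  next
    case (2 T)
    then have "(1 + \<epsilon>) * (Ip - x0) \<le> real T * R"
      by (simp add: pos_divide_le_eq)
    with 2 show ?case
      using adapted X0 stop D s eps unfolding Let_def
      by (intro conjI prob_no_upper_exit_le drift_conditions_cond_bernstein)
        (auto intro: le_less_trans[OF min.cobounded1] le_less_trans[OF min.cobounded2])
  qed
qed

end
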